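(* Let $k\in\mathbb N$ and let $f:\Xi_k\to\mathbb R$ satisfy $\mathfrak a^\dagger_{k-1}f=0$. Then $$\mathcal E_{\alpha,k}(f)\ge k\Big(\inf_{\xi\in\Xi_{k-1}}\mathrm{gap}_{\rm RW}(\alpha+\xi)\Big)\,\mathrm{Var}_{\alpha,k}(f).$$
   Context: $V$ is a finite set with symmetric non-negative weights $c_{xy}=c_{yx}\ge0$ forming a connected graph, $\alpha=(\alpha_x)_{x\in V}$ positive, $|\alpha|=\sum_x\alpha_x$. $\Xi_k:=\{\eta\in\mathbb N_0^V:\sum_x\eta_x=k\}$. $\mu_{\alpha,k}(\eta)\propto\prod_x\frac{\Gamma(\alpha_x+\eta_x)}{\Gamma(\alpha_x)\eta_x!}$ is a probability on $\Xi_k$, $\langle f,g\rangle_{\alpha,k}=\sum_\eta\mu_{\alpha,k}(\eta)f(\eta)g(\eta)$, $\mathrm{Var}_{\alpha,k}(f)=\langle f,f\rangle_{\alpha,k}-\langle f,1\rangle_{\alpha,k}^2$. $L_kf(\eta)=\sum_x\eta_x\sum_yc_{xy}(\alpha_y+\eta_y)(f(\eta-\delta_x+\delta_y)-f(\eta))$ ($\eta-\delta_x+\delta_y$: move a particle from $x$ to $y$) and $\mathcal E_{\alpha,k}(f)=\langle f,-L_kf\rangle_{\alpha,k}$. The creation operator is $\mathfrak a^\dagger_{k-1}f(\xi)=\sum_x(\xi_x+\alpha_x)f(\xi+\delta_x)$ for $\xi\in\Xi_{k-1}$. For any positive weight vector $\beta=(\beta_x)_{x\in V}$, $\mathrm{gap}_{\rm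 RW}(\beta)$ is the smallest nonzero eigenvalue of $-A_\beta$, where $A_\beta\phi(x)=\sum_yc_{xy}\beta_y(\phi(y)-\phi(x))$; here $\alpha+\xi$ is the vector $(\alpha_x+\xi_x)_{x\in V}$. *)

theory Defs
  imports "HOL-Analysis.Analysis"
begin

definition Xi :: "nat \<Rightarrow> ('v::finite \<Rightarrow> nat) set" where
  "Xi k = {\<eta>. (\<Sum>x\<in>UNIV. \<eta> x) = k}"

definition mu_weight :: "('v::finite \<Rightarrow> real) \<Rightarrow> ('v \<Rightarrow> nat) \<Rightarrow> real" where
  "mu_weight \<alpha> \<eta> = (\<Prod>x\<in>UNIV. Gamma (\<alpha> x + real (\<eta> x)) / (Gamma (\<alpha> x) * fact (\<eta> x)))"

definition mu :: "('v::finite \<Rightarrow> real) \<Rightarrow> nat \<Rightarrow> ('v \<Rightarrow> nat) \<Rightarrow> real" where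
  "mu \<alpha> k \<eta> = mu_weight \<alpha> \<eta> / (\<Sum>\<zeta>\<in>Xi k. mu_weight \<alpha> \<zeta>)"

definition inner_mu :: "('v::finite \<Rightarrow> real) \<Rightarrow> nat \<Rightarrow> (('v \<Rightarrow> nat) \<Rightarrow> real)
    \<Rightarrow> (('v \<Rightarrow> nat) \<Rightarrow> real) \<Rightarrow> real" where
  "inner_mu \<alpha> k f g = (\<Sum>\<eta>\<in>Xi k. mu \<alpha> k \<eta> * f \<eta> * g \<eta>)"

definition Var_mu :: "('v::finite \<Rightarrow> real) \<Rightarrow> nat \<Rightarrow> (('v \<Rightarrow> nat) \<Rightarrow> real) \<Rightarrow> real" where
  "Var_mu \<alpha> k f = inner_mu \<alpha> k f f - (inner_mu \<alpha> k f (\<lambda>_. 1))\<^sup>2"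

text \<open>eta - delta_x + delta_y (used only when eta x \<ge> 1).\<close>
definition move :: "('v \<Rightarrow> nat) \<Rightarrow> 'v \<Rightarrow> 'v \<Rightarrow> ('v \<Rightarrow> nat)" where
  "move \<eta> x y = (\<lambda>z. \<eta> z - (if z = x then 1 else 0) + (if z = y then 1 else 0))"

definition gen_L :: "('v::finite \<Rightarrow> 'v \<Rightarrow> real) \<Rightarrow> ('v \<Rightarrow> real)
    \<Rightarrow> (('v \<Rightarrow> nat) \<Rightarrow> real) \<Rightarrow> ('v \<Rightarrow> nat) \<Rightarrow> real" where
  "gen_L c \<alpha> f \<eta> = (\<Sum>x\<in>UNIV. real (\<eta> x) *
      (\<Sum>y\<in>UNIV. c x y * (\<alpha> y + real (\<eta> y)) * (f (move \<eta> x y) - f \<eta>)))"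

definition energy :: "('v::finite \<Rightarrow> 'v \<Rightarrow> real) \<Rightarrow> ('v \<Rightarrow> real) \<Rightarrow> nat
    \<Rightarrow> (('v \<Rightarrow> nat) \<Rightarrow> real) \<Rightarrow> real" where
  "energy c \<alpha> k f = inner_mu \<alpha> k f (\<lambda>\<eta>. - gen_L c \<alpha> f \<eta>)"

definition creation :: "('v::finite \<Rightarrow> real) \<Rightarrow> (('v \<Rightarrow> nat) \<Rightarrow> real) \<Rightarrow> ('v \<Rightarrow> nat) \<Rightarrow> real" where
  "creation \<alpha> f \<xi> = (\<Sum>x\<in>UNIV. (real (\<xi> x) + \<alpha> x) * f (\<xi>(x := \<xi> x + 1)))"

definition A_RW :: "('v::finite \<Rightarrow> 'v \<Rightarrow> real) \<Rightarrow> ('v \<Rightarrow> real) \<Rightarrow> ('v \<Rightarrow> real) \<Rightarrow> 'v \<Rightarrow> real" where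
  "A_RW c \<beta> \<phi> x = (\<Sum>y\<in>UNIV. c x y * \<beta> y * (\<phi> y - \<phi> x))"

definition is_eigenvalue_negA :: "('v::finite \<Rightarrow> 'v \<Rightarrow> real) \<Rightarrow> ('v \<Rightarrow> real) \<Rightarrow> real \<Rightarrow> bool" where
  "is_eigenvalue_negA c \<beta> l \<longleftrightarrow> (\<exists>\<phi>. (\<exists>x. \<phi> x \<noteq> 0) \<and> (\<forall>x. - A_RW c \<beta> \<phi> x = l * \<phi> x))"

definition gap_RW :: "('v::finite \<Rightarrow> 'v \<Rightarrow> real) \<Rightarrow> ('v \<Rightarrow> real) \<Rightarrow> real" where
  "gap_RW c \<beta> = Inf {l. l \<noteq> 0 \<and> is_eigenvalue_negA c \<beta> l}"

end

(*
  Write a configuration of Xi k with a particle at x as xi + delta_x with xi in Xi (k - 1).  The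
  Gamma function identity eta_x mu(eta) = (alpha_x + xi_x) mu(xi) turns both the energy of f and
  k Var(f) into mu-averages over xi of the Dirichlet form, respectively the squared norm, of
  phi_xi(x) = f(xi + delta_x) for the random walk A_beta with beta = alpha + xi, which is reversible
  with respect to beta.  The hypothesis that the creation operator kills f says precisely that
  every phi_xi is beta-orthogonal to the constants (and, after averaging, that f has mean zero),
  so the Poincare inequality gap_RW(beta) |phi_xi|^2 <= D_beta(phi_xi) applies term by term.

  The Poincare inequality is proved variationally: a minimiser of the Dirichlet form on the unit
  sphere of the orthogonal complement of the constants is an eigenfunction of -A_beta, and its
  eigenvalue is non-zero because the graph is connected.
*)

theory Submission
  imports Defs
begin

section \<open>Dirichlet form and Poincare inequality of a reversible random walk\<close>

lemma nonneg_quadratic_imp_linear_coeff_0: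
  fixes a b :: real
  assumes "\<And>t. 2 * t * b + t\<^sup>2 * a \<ge> 0"
  shows "b = 0"
proof (rule ccontr)
  assume "b \<noteq> 0"
  define s where "s = 1 / (\<bar>a\<bar> + 1)"
  have "s > 0" and "s * a < 2"
    unfolding s_def by (auto simp: field_simps abs_if split: if_splits)
  then have "b\<^sup>2 * s * (s * a - 2) < 0"
    using \<open>b \<noteq> 0\<close> by (intro mult_pos_neg) auto
  moreover have "2 * (- b * s) * b + (- b * s)\<^sup>2 * a \<ge> 0" by (rule assms)
  ultimately show False by (simp add: algebra_simps power2_eq_square)
qed

definition rw_dirichlet :: "('v::finite \<Rightarrow> 'v \<Rightarrow> real) \<Rightarrow> ('v \<Rightarrow> real)
    \<Rightarrow> ('v \<Rightarrow> real) \<Rightarrow> ('v \<Rightarrow> real) \<Rightarrow> real" where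
  "rw_dirichlet c \<beta> \<phi> \<psi> = (\<Sum>x\<in>UNIV. \<beta> x * \<psi> x * - A_RW c \<beta> \<phi> x)"

definition weighted_sq_norm :: "('v::finite \<Rightarrow> real) \<Rightarrow> ('v \<Rightarrow> real) \<Rightarrow> real" where
  "weighted_sq_norm \<beta> \<phi> = (\<Sum>x\<in>UNIV. \<beta> x * (\<phi> x)\<^sup>2)"

lemma A_RW_add_scaled:
  "A_RW c \<beta> (\<lambda>x. \<phi> x + t * \<psi> x) x = A_RW c \<beta> \<phi> x + t * A_RW c \<beta> \<psi> x"
  unfolding A_RW_def sum_distrib_left sum.distrib[symmetric] by (simp add: algebra_simps)

lemma A_RW_scaled: "A_RW c \<beta> (\<lambda>x. t * \<phi> x) x = t * A_RW c \<beta> \<phi> x"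
  unfolding A_RW_def by (simp add: sum_distrib_left algebra_simps)

lemma neg_A_RW: "- A_RW c \<beta> \<phi> x = (\<Sum>y\<in>UNIV. c x y * \<beta> y * (\<phi> x - \<phi> y))"
  unfolding A_RW_def by (simp add: sum_negf[symmetric] algebra_simps)

lemma rw_dirichlet_symmetric:
  assumes "\<And>x y. c x y = c y x"
  shows "rw_dirichlet c \<beta> \<phi> \<psi> =
    (\<Sum>x\<in>UNIV. \<Sum>y\<in>UNIV. \<beta> x * c x y * \<beta> y * (\<phi> x - \<phi> y) * (\<psi> x - \<psi> y)) / 2"
proof -
  have D: "rw_dirichlet c \<beta> \<phi> \<psi> = (\<Sum>x\<in>UNIV. \<Sum>y\<in>UNIV. \<beta> x * c x y * \<beta> y * \<psi> x * (\<phi> x - \<phi> y))"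
    unfolding rw_dirichlet_def A_RW_def by (simp add: sum_distrib_left sum_negf[symmetric] algebra_simps)
  also have "\<dots> = (\<Sum>x\<in>UNIV. \<Sum>y\<in>UNIV. \<beta> x * c x y * \<beta> y * \<psi> y * (\<phi> y - \<phi> x))"
    by (subst sum.swap) (simp add: assms mult_ac)
  finally have "2 * rw_dirichlet c \<beta> \<phi> \<psi> =
      (\<Sum>x\<in>UNIV. \<Sum>y\<in>UNIV. \<beta> x * c x y * \<beta> y * \<psi> x * (\<phi> x - \<phi> y))
    + (\<Sum>x\<in>UNIV. \<Sum>y\<in>UNIV. \<beta> x * c x y * \<beta> y * \<psi> y * (\<phi> y - \<phi> x))"
    using D by simp
  also have "\<dots> = (\<Sum>x\<in>UNIV. \<Sum>y\<in>UNIV. \<beta> x * c x y * \<beta> y * (\<phi> x - \<phi> y) * (\<psi> x - \<psi> y))"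
    by (simp add: sum.distrib[symmetric] algebra_simps)
  finally show ?thesis by simp
qed

lemma rw_dirichlet_self:
  assumes "\<And>x y. c x y = c y x"
  shows "rw_dirichlet c \<beta> \<phi> \<phi> =
    (\<Sum>x\<in>UNIV. \<Sum>y\<in>UNIV. \<beta> x * c x y * \<beta> y * (\<phi> x - \<phi> y)\<^sup>2) / 2"
  unfolding rw_dirichlet_symmetric[OF assms] by (simp add: power2_eq_square mult.assoc)

lemma rw_dirichlet_commute:
  assumes "\<And>x y. c x y = c y x"
  shows "rw_dirichlet c \<beta> \<phi> \<psi> = rw_dirichlet c \<beta> \<psi> \<phi>"
  unfolding rw_dirichlet_symmetric[OF assms] by (simp add: mult_ac)

lemma sum_weighted_A_RW:
  assumes "\<And>x y. c x y = c y x"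
  shows "(\<Sum>x\<in>UNIV. \<beta> x * A_RW c \<beta> \<phi> x) = 0"
  using rw_dirichlet_symmetric[OF assms, where \<beta>=\<beta> and \<phi>=\<phi> and \<psi>="\<lambda>_. 1"]
  by (simp add: rw_dirichlet_def sum_negf)

lemma rw_dirichlet_add_scaled:
  assumes "\<And>x y. c x y = c y x"
  shows "rw_dirichlet c \<beta> (\<lambda>x. \<phi> x + t * \<psi> x) (\<lambda>x. \<phi> x + t * \<psi> x)
    = rw_dirichlet c \<beta> \<phi> \<phi> + 2 * t * rw_dirichlet c \<beta> \<phi> \<psi> + t\<^sup>2 * rw_dirichlet c \<beta> \<psi> \<psi>"
proof -
  have "rw_dirichlet c \<beta> \<psi> \<phi> = rw_dirichlet c \<beta> \<phi> \<psi>"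
    by (rule rw_dirichlet_commute[OF assms])
  moreover have "rw_dirichlet c \<beta> (\<lambda>x. \<phi> x + t * \<psi> x) (\<lambda>x. \<phi> x + t * \<psi> x)
    = rw_dirichlet c \<beta> \<phi> \<phi> + t * rw_dirichlet c \<beta> \<psi> \<phi> + t * rw_dirichlet c \<beta> \<phi> \<psi>
      + t\<^sup>2 * rw_dirichlet c \<beta> \<psi> \<psi>"
    unfolding rw_dirichlet_def A_RW_add_scaled sum_distrib_left sum.distrib[symmetric]
    by (intro sum.cong) (simp_all add: algebra_simps power2_eq_square)
  ultimately show ?thesis by simp
qed

lemma rw_dirichlet_scaled:
  "rw_dirichlet c \<beta> (\<lambda>x. s * \<phi> x) (\<lambda>x. s * \<phi> x) = s\<^sup>2 * rw_dirichlet c \<beta> \<phi> \<phi>"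
  unfolding rw_dirichlet_def A_RW_scaled
  by (simp add: sum_distrib_left algebra_simps power2_eq_square)

lemma rw_dirichlet_nonneg:
  assumes "\<And>x y. c x y = c y x" "\<And>x y. c x y \<ge> 0" "\<And>x. \<beta> x \<ge> 0"
  shows "rw_dirichlet c \<beta> \<phi> \<phi> \<ge> 0"
  unfolding rw_dirichlet_self[OF assms(1)] by (simp add: assms sum_nonneg)

lemma rw_dirichlet_eq_0_imp_constant:
  assumes sym: "\<And>x y. c x y = c y x" and nonneg: "\<And>x y. c x y \<ge> 0"
    and pos: "\<And>x. \<beta> x > 0"
    and connected: "\<And>x y. (x, y) \<in> {(a, b). c a b > 0}\<^sup>*"
    and zero: "rw_dirichlet c \<beta> \<phi> \<phi> = 0"
  shows "\<phi> x = \<phi> y"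
proof -
  have terms_nonneg: "\<beta> a * c a b * \<beta> b * (\<phi> a - \<phi> b)\<^sup>2 \<ge> 0" for a b
    using nonneg[of a b] pos[of a] pos[of b] by simp
  have "(\<Sum>a\<in>UNIV. \<Sum>b\<in>UNIV. \<beta> a * c a b * \<beta> b * (\<phi> a - \<phi> b)\<^sup>2) = 0"
    using zero unfolding rw_dirichlet_self[OF sym] by simp
  then have "\<forall>a\<in>UNIV. (\<Sum>b\<in>UNIV. \<beta> a * c a b * \<beta> b * (\<phi> a - \<phi> b)\<^sup>2) = 0"
    by (intro sum_nonneg_eq_0_iff[THEN iffD1]) (simp_all add: sum_nonneg terms_nonneg)
  then have "\<beta> a * c a b * \<beta> b * (\<phi> a - \<phi> b)\<^sup>2 = 0" for a b
    using sum_nonneg_eq_0_iff[of UNIV "\<lambda>b. \<beta> a * c a b * \<beta> b * (\<phi> a - \<phi> b)\<^sup>2"] terms_nonneg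
    by (simp, blast)
  then have edge: "\<phi> a = \<phi> b" if "c a b > 0" for a b
    using that pos[of a] pos[of b] by force
  from connected[of x y] show ?thesis
    by (induction rule: rtrancl_induct) (auto dest: edge)
qed

lemma weighted_sq_norm_nonneg:
  assumes "\<And>x. \<beta> x \<ge> 0"
  shows "weighted_sq_norm \<beta> \<phi> \<ge> 0"
  unfolding weighted_sq_norm_def by (simp add: assms sum_nonneg)

lemma weighted_sq_norm_eq_0_iff:
  assumes "\<And>x. \<beta> x > 0"
  shows "weighted_sq_norm \<beta> \<phi> = 0 \<longleftrightarrow> (\<forall>x. \<phi> x = 0)"
  using assms unfolding weighted_sq_norm_def
  by (simp add: sum_nonneg_eq_0_iff less_imp_le) (metis less_irrefl)

lemma weighted_sq_norm_scaled:
  "weighted_sq_norm \<beta> (\<lambda>x. s * \<phi> x) = s\<^sup>2 * weighted_sq_norm \<beta> \<phi>"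
  unfolding weighted_sq_norm_def by (simp add: sum_distrib_left power_mult_distrib mult_ac)

lemma weighted_sq_norm_add_scaled:
  "weighted_sq_norm \<beta> (\<lambda>x. \<phi> x + t * \<psi> x) = weighted_sq_norm \<beta> \<phi>
    + 2 * t * (\<Sum>x\<in>UNIV. \<beta> x * \<phi> x * \<psi> x) + t\<^sup>2 * weighted_sq_norm \<beta> \<psi>"
  unfolding weighted_sq_norm_def sum_distrib_left sum.distrib[symmetric]
  by (intro sum.cong) (simp_all add: algebra_simps power2_eq_square)

lemma weighted_sq_norm_normalized:
  assumes "weighted_sq_norm \<beta> \<phi> > 0"
  shows "weighted_sq_norm \<beta> (\<lambda>x. 1 / sqrt (weighted_sq_norm \<beta> \<phi>) * \<phi> x) = 1"
  unfolding weighted_sq_norm_scaled using assms by (simp add: power_divide)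

lemma sum_weighted_scaled:
  fixes \<beta> :: "'v::finite \<Rightarrow> real"
  shows "(\<Sum>x\<in>UNIV. \<beta> x * (s * \<phi> x)) = s * (\<Sum>x\<in>UNIV. \<beta> x * \<phi> x)"
  by (simp add: sum_distrib_left mult.left_commute)

lemma eigenvalue_negA_nonneg:
  assumes sym: "\<And>x y. c x y = c y x" and nonneg: "\<And>x y. c x y \<ge> 0"
    and pos: "\<And>x. \<beta> x > 0"
    and "is_eigenvalue_negA c \<beta> l"
  shows "l \<ge> 0"
proof -
  obtain \<psi> where nonzero: "\<exists>x. \<psi> x \<noteq> 0" and eigen: "\<And>x. - A_RW c \<beta> \<psi> x = l * \<psi> x"
    using assms(4) unfolding is_eigenvalue_negA_def by blast
  have "rw_dirichlet c \<beta> \<psi> \<psi> = l * weighted_sq_norm \<beta> \<psi>"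
    unfolding rw_dirichlet_def weighted_sq_norm_def eigen
    by (simp add: sum_distrib_left power2_eq_square mult_ac)
  moreover have "weighted_sq_norm \<beta> \<psi> > 0"
    using weighted_sq_norm_nonneg[of \<beta> \<psi>] weighted_sq_norm_eq_0_iff[of \<beta> \<psi>] pos nonzero
    by (simp add: less_imp_le order_less_le)
  moreover have "rw_dirichlet c \<beta> \<psi> \<psi> \<ge> 0"
    using rw_dirichlet_nonneg[where c=c and \<beta>=\<beta>, OF sym nonneg] pos by (simp add: less_imp_le)
  ultimately show ?thesis by (simp add: zero_le_mult_iff)
qed

lemma gap_RW_le_eigenvalue:
  assumes "\<And>x y. c x y = c y x" "\<And>x y. c x y \<ge> 0" "\<And>x. \<beta> x > 0"
    and "is_eigenvalue_negA c \<beta> l" "l \<noteq> 0"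
  shows "gap_RW c \<beta> \<le> l"
  unfolding gap_RW_def
proof (rule cInf_lower)
  show "bdd_below {l. l \<noteq> 0 \<and> is_eigenvalue_negA c \<beta> l}"
    using eigenvalue_negA_nonneg[where c=c and \<beta>=\<beta>, OF assms(1-3)]
    by (intro bdd_belowI[of _ 0]) blast
qed (use assms(4,5) in blast)

lemma rw_dirichlet_attains_min_on_sphere:
  fixes \<beta> :: "'v::finite \<Rightarrow> real"
  assumes pos: "\<And>x. \<beta> x > 0"
    and "(\<Sum>x\<in>UNIV. \<beta> x * \<phi> x) = 0" "weighted_sq_norm \<beta> \<phi> = 1"
  obtains \<phi>0 where "(\<Sum>x\<in>UNIV. \<beta> x * \<phi>0 x) = 0" "weighted_sq_norm \<beta> \<phi>0 = 1"
    "\<And>\<psi>. (\<Sum>x\<in>UNIV. \<beta> x * \<psi> x) = 0 \<Longrightarrow> weighted_sq_norm \<beta> \<psi> = 1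
      \<Longrightarrow> rw_dirichlet c \<beta> \<phi>0 \<phi>0 \<le> rw_dirichlet c \<beta> \<psi> \<psi>"
proof -
  \<comment> \<open>Compactness is argued in \<open>real^'v\<close>, which carries the Euclidean topology.\<close>
  define S where "S = {v :: real^'v. (\<Sum>x\<in>UNIV. \<beta> x * v $ x) = 0
    \<and> weighted_sq_norm \<beta> (\<lambda>x. v $ x) = 1}"
  have "closed S"
    unfolding S_def weighted_sq_norm_def
    by (intro closed_Collect_conj closed_Collect_eq continuous_intros)
  moreover have "bounded S"
  proof -
    have "\<bar>v $ x\<bar> \<le> sqrt (1 / \<beta> x)" if "v \<in> S" for v x
    proof -
      have "\<beta> x * (v $ x)\<^sup>2 \<le> weighted_sq_norm \<beta> (\<lambda>x. v $ x)"
        unfolding weighted_sq_norm_def by (rule member_le_sum) (auto simp: pos less_imp_le)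
      then have "(v $ x)\<^sup>2 \<le> 1 / \<beta> x"
        using that pos[of x] unfolding S_def by (simp add: field_simps)
      then show ?thesis by (metis real_sqrt_abs real_sqrt_le_mono)
    qed
    then have "norm v \<le> (\<Sum>x\<in>UNIV. sqrt (1 / \<beta> x))" if "v \<in> S" for v
      using that by (intro order.trans[OF norm_le_l1_cart sum_mono]) blast
    then show ?thesis unfolding bounded_iff by blast
  qed
  ultimately have "compact S" by (simp add: compact_eq_bounded_closed)
  moreover have "continuous_on S (\<lambda>v. rw_dirichlet c \<beta> (\<lambda>x. v $ x) (\<lambda>x. v $ x))"
    unfolding rw_dirichlet_def A_RW_def by (intro continuous_intros)
  moreover have "(\<chi> x. \<phi> x) \<in> S" using assms(2,3) unfolding S_def by (simp add: vec_lambda_inverse)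
  ultimately have "\<exists>v0\<in>S. \<forall>v\<in>S.
      rw_dirichlet c \<beta> (\<lambda>x. v0 $ x) (\<lambda>x. v0 $ x) \<le> rw_dirichlet c \<beta> (\<lambda>x. v $ x) (\<lambda>x. v $ x)"
    by (intro continuous_attains_inf) auto
  then obtain v0 where v0: "v0 \<in> S" and min: "\<And>v. v \<in> S \<Longrightarrow>
      rw_dirichlet c \<beta> (\<lambda>x. v0 $ x) (\<lambda>x. v0 $ x) \<le> rw_dirichlet c \<beta> (\<lambda>x. v $ x) (\<lambda>x. v $ x)"
    by blast
  show ?thesis
  proof (rule that)
    show "(\<Sum>x\<in>UNIV. \<beta> x * v0 $ x) = 0" "weighted_sq_norm \<beta> (\<lambda>x. v0 $ x) = 1"
      using v0 unfolding S_def by auto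
  next
    fix \<psi> assume "(\<Sum>x\<in>UNIV. \<beta> x * \<psi> x) = 0" "weighted_sq_norm \<beta> \<psi> = 1"
    then have "(\<chi> x. \<psi> x) \<in> S" unfolding S_def by (simp add: vec_lambda_inverse)
    from min[OF this] show "rw_dirichlet c \<beta> (\<lambda>x. v0 $ x) (\<lambda>x. v0 $ x) \<le> rw_dirichlet c \<beta> \<psi> \<psi>"
      by (simp add: vec_lambda_inverse)
  qed
qed

lemma rw_rayleigh_bound_from_sphere:
  assumes pos: "\<And>x. \<beta> x > 0"
    and sphere: "\<And>\<psi>. (\<Sum>x\<in>UNIV. \<beta> x * \<psi> x) = 0 \<Longrightarrow> weighted_sq_norm \<beta> \<psi> = 1
      \<Longrightarrow> l \<le> rw_dirichlet c \<beta> \<psi> \<psi>"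
    and orth: "(\<Sum>x\<in>UNIV. \<beta> x * \<psi> x) = 0"
  shows "l * weighted_sq_norm \<beta> \<psi> \<le> rw_dirichlet c \<beta> \<psi> \<psi>"
proof (cases "weighted_sq_norm \<beta> \<psi> = 0")
  case True
  then show ?thesis
    using weighted_sq_norm_eq_0_iff[of \<beta> \<psi>] pos by (simp add: rw_dirichlet_def)
next
  case False
  then have norm_pos: "weighted_sq_norm \<beta> \<psi> > 0"
    using weighted_sq_norm_nonneg[of \<beta> \<psi>] pos by (simp add: less_imp_le)
  define s where "s = 1 / sqrt (weighted_sq_norm \<beta> \<psi>)"
  have s_sq: "s\<^sup>2 * weighted_sq_norm \<beta> \<psi> = 1"
    using weighted_sq_norm_normalized[OF norm_pos] unfolding s_def weighted_sq_norm_scaled .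
  have "l \<le> rw_dirichlet c \<beta> (\<lambda>x. s * \<psi> x) (\<lambda>x. s * \<psi> x)"
    using orth s_sq by (intro sphere) (simp_all add: weighted_sq_norm_scaled sum_weighted_scaled)
  then have "l \<le> s\<^sup>2 * rw_dirichlet c \<beta> \<psi> \<psi>"
    by (simp add: rw_dirichlet_scaled)
  then have "l * weighted_sq_norm \<beta> \<psi> \<le> s\<^sup>2 * weighted_sq_norm \<beta> \<psi> * rw_dirichlet c \<beta> \<psi> \<psi>"
    using norm_pos by (simp add: mult_right_mono mult_ac)
  then show ?thesis using s_sq by simp
qed

lemma rw_rayleigh_minimizer_exists:
  assumes pos: "\<And>x. \<beta> x > 0"
    and orth: "(\<Sum>x\<in>UNIV. \<beta> x * \<phi> x) = 0" and norm_pos: "weighted_sq_norm \<beta> \<phi> > 0"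
  obtains \<phi>0 where "(\<Sum>x\<in>UNIV. \<beta> x * \<phi>0 x) = 0" "weighted_sq_norm \<beta> \<phi>0 = 1"
    "\<And>\<psi>. (\<Sum>x\<in>UNIV. \<beta> x * \<psi> x) = 0
      \<Longrightarrow> rw_dirichlet c \<beta> \<phi>0 \<phi>0 * weighted_sq_norm \<beta> \<psi> \<le> rw_dirichlet c \<beta> \<psi> \<psi>"
proof -
  define s where "s = 1 / sqrt (weighted_sq_norm \<beta> \<phi>)"
  have "(\<Sum>x\<in>UNIV. \<beta> x * (s * \<phi> x)) = 0" "weighted_sq_norm \<beta> (\<lambda>x. s * \<phi> x) = 1"
    using orth weighted_sq_norm_normalized[OF norm_pos] by (simp_all only: s_def sum_weighted_scaled)
  with pos obtain \<phi>0 where orth0: "(\<Sum>x\<in>UNIV. \<beta> x * \<phi>0 x) = 0"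
    and norm0: "weighted_sq_norm \<beta> \<phi>0 = 1"
    and sphere: "\<And>\<psi>. (\<Sum>x\<in>UNIV. \<beta> x * \<psi> x) = 0 \<Longrightarrow> weighted_sq_norm \<beta> \<psi> = 1
      \<Longrightarrow> rw_dirichlet c \<beta> \<phi>0 \<phi>0 \<le> rw_dirichlet c \<beta> \<psi> \<psi>"
    by (rule rw_dirichlet_attains_min_on_sphere[where c = c]) auto
  show ?thesis
  proof (rule that[OF orth0 norm0])
    fix \<psi> assume "(\<Sum>x\<in>UNIV. \<beta> x * \<psi> x) = 0"
    with pos sphere show "rw_dirichlet c \<beta> \<phi>0 \<phi>0 * weighted_sq_norm \<beta> \<psi> \<le> rw_dirichlet c \<beta> \<psi> \<psi>"
      by (rule rw_rayleigh_bound_from_sphere)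
  qed
qed

lemma rw_rayleigh_minimizer_eigenfunction:
  assumes sym: "\<And>x y. c x y = c y x" and pos: "\<And>x. \<beta> x > 0"
    and rayleigh: "\<And>\<psi>. (\<Sum>x\<in>UNIV. \<beta> x * \<psi> x) = 0
      \<Longrightarrow> l * weighted_sq_norm \<beta> \<psi> \<le> rw_dirichlet c \<beta> \<psi> \<psi>"
    and orth0: "(\<Sum>x\<in>UNIV. \<beta> x * \<phi> x) = 0"
    and attained: "rw_dirichlet c \<beta> \<phi> \<phi> = l * weighted_sq_norm \<beta> \<phi>"
  shows "- A_RW c \<beta> \<phi> x = l * \<phi> x"
proof -
  have first_variation: "rw_dirichlet c \<beta> \<phi> \<psi> = l * (\<Sum>x\<in>UNIV. \<beta> x * \<phi> x * \<psi> x)"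
    if orth: "(\<Sum>x\<in>UNIV. \<beta> x * \<psi> x) = 0" for \<psi>
  proof -
    have "2 * t * (rw_dirichlet c \<beta> \<phi> \<psi> - l * (\<Sum>x\<in>UNIV. \<beta> x * \<phi> x * \<psi> x))
        + t\<^sup>2 * (rw_dirichlet c \<beta> \<psi> \<psi> - l * weighted_sq_norm \<beta> \<psi>) \<ge> 0" for t
    proof -
      have "(\<Sum>x\<in>UNIV. \<beta> x * (\<phi> x + t * \<psi> x)) = 0"
        using orth0 orth by (simp add: algebra_simps sum.distrib sum_distrib_left[symmetric])
      from rayleigh[OF this] show ?thesis
        unfolding rw_dirichlet_add_scaled[OF sym] weighted_sq_norm_add_scaled attained
        by (simp add: algebra_simps)
    qed
    then show ?thesis
      using nonneg_quadratic_imp_linear_coeff_0 by fastforce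
  qed
  \<comment> \<open>The residual is orthogonal to the constants, so the first variation in its own
    direction shows that its norm vanishes.\<close>
  define r where "r x = - A_RW c \<beta> \<phi> x - l * \<phi> x" for x
  have "(\<Sum>x\<in>UNIV. \<beta> x * r x) = 0"
    using sum_weighted_A_RW[OF sym] orth0
    by (simp add: r_def algebra_simps sum_subtractf sum_negf sum_distrib_left[symmetric])
  then have "rw_dirichlet c \<beta> \<phi> r = l * (\<Sum>x\<in>UNIV. \<beta> x * \<phi> x * r x)"
    by (rule first_variation)
  moreover have "weighted_sq_norm \<beta> r = rw_dirichlet c \<beta> \<phi> r - l * (\<Sum>x\<in>UNIV. \<beta> x * \<phi> x * r x)"
    unfolding weighted_sq_norm_def rw_dirichlet_def sum_distrib_left sum_subtractf[symmetric]
    by (intro sum.cong) (simp_all add: r_def algebra_simps power2_eq_square)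
  ultimately have "weighted_sq_norm \<beta> r = 0" by simp
  then show ?thesis
    using weighted_sq_norm_eq_0_iff[of \<beta> r] pos by (simp add: r_def)
qed

lemma rw_dirichlet_eq_0_orthogonal_imp_zero:
  assumes sym: "\<And>x y. c x y = c y x" and nonneg: "\<And>x y. c x y \<ge> 0"
    and pos: "\<And>x. \<beta> x > 0"
    and connected: "\<And>x y. (x, y) \<in> {(a, b). c a b > 0}\<^sup>*"
    and orth: "(\<Sum>x\<in>UNIV. \<beta> x * \<phi> x) = 0"
    and zero: "rw_dirichlet c \<beta> \<phi> \<phi> = 0"
  shows "\<phi> y = 0"
proof -
  from sym nonneg pos connected zero have const: "\<phi> x = \<phi> y" for x
    by (rule rw_dirichlet_eq_0_imp_constant)
  have "(\<Sum>x\<in>UNIV. \<beta> x * \<phi> x) = (\<Sum>x\<in>UNIV. \<beta> x * \<phi> y)"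
    by (intro sum.cong refl arg_cong2[where f = times] const)
  then have "(\<Sum>x\<in>UNIV. \<beta> x) * \<phi> y = 0"
    using orth by (simp add: sum_distrib_right)
  moreover have "(\<Sum>x\<in>UNIV. \<beta> x) > 0" using pos by (simp add: sum_pos)
  ultimately show ?thesis by simp
qed

lemma rw_poincare:
  assumes sym: "\<And>x y. c x y = c y x" and nonneg: "\<And>x y. c x y \<ge> 0"
    and pos: "\<And>x. \<beta> x > 0"
    and connected: "\<And>x y. (x, y) \<in> {(a, b). c a b > 0}\<^sup>*"
    and orth: "(\<Sum>x\<in>UNIV. \<beta> x * \<phi> x) = 0"
  shows "gap_RW c \<beta> * weighted_sq_norm \<beta> \<phi> \<le> rw_dirichlet c \<beta> \<phi> \<phi>"
proof (cases "weighted_sq_norm \<beta> \<phi> = 0")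
  case True
  then show ?thesis
    using rw_dirichlet_nonneg[of c \<beta> \<phi>] sym nonneg pos by (simp add: less_imp_le)
next
  case False
  then have norm_pos: "weighted_sq_norm \<beta> \<phi> > 0"
    using weighted_sq_norm_nonneg[of \<beta> \<phi>] pos by (simp add: less_imp_le)
  with pos orth obtain \<phi>0 where orth0: "(\<Sum>x\<in>UNIV. \<beta> x * \<phi>0 x) = 0"
    and norm0: "weighted_sq_norm \<beta> \<phi>0 = 1"
    and rayleigh: "\<And>\<psi>. (\<Sum>x\<in>UNIV. \<beta> x * \<psi> x) = 0
      \<Longrightarrow> rw_dirichlet c \<beta> \<phi>0 \<phi>0 * weighted_sq_norm \<beta> \<psi> \<le> rw_dirichlet c \<beta> \<psi> \<psi>"
    by (rule rw_rayleigh_minimizer_exists[where c = c]) auto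
  define l0 where "l0 = rw_dirichlet c \<beta> \<phi>0 \<phi>0"
  have nonzero: "\<exists>x. \<phi>0 x \<noteq> 0"
    using norm0 weighted_sq_norm_eq_0_iff[of \<beta> \<phi>0] pos by auto
  have "- A_RW c \<beta> \<phi>0 x = l0 * \<phi>0 x" for x
    using rw_rayleigh_minimizer_eigenfunction[of c \<beta> l0 \<phi>0] sym pos rayleigh orth0 norm0
    unfolding l0_def by simp
  with nonzero have "is_eigenvalue_negA c \<beta> l0"
    unfolding is_eigenvalue_negA_def by blast
  moreover have "l0 \<noteq> 0"
  proof
    assume "l0 = 0"
    then have "rw_dirichlet c \<beta> \<phi>0 \<phi>0 = 0" unfolding l0_def .
    with sym nonneg pos connected orth0 have "\<phi>0 x = 0" for x
      by (rule rw_dirichlet_eq_0_orthogonal_imp_zero)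
    with nonzero show False by simp
  qed
  ultimately have "gap_RW c \<beta> \<le> l0"
    using sym nonneg pos by (intro gap_RW_le_eigenvalue)
  then have "gap_RW c \<beta> * weighted_sq_norm \<beta> \<phi> \<le> l0 * weighted_sq_norm \<beta> \<phi>"
    using norm_pos by (simp add: mult_right_mono)
  also have "\<dots> \<le> rw_dirichlet c \<beta> \<phi> \<phi>"
    using rayleigh[OF orth] unfolding l0_def .
  finally show ?thesis .
qed

section \<open>Adding a particle\<close>

definition add_particle :: "'v \<Rightarrow> ('v \<Rightarrow> nat) \<Rightarrow> ('v \<Rightarrow> nat)" where
  "add_particle x \<xi> = \<xi>(x := \<xi> x + 1)"

lemma finite_Xi: "finite (Xi k :: ('v::finite \<Rightarrow> nat) set)"
proof (rule finite_subset)
  show "Xi k \<subseteq> PiE UNIV (\<lambda>_::'v. {..k})"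
    unfolding Xi_def by (auto simp: PiE_UNIV_domain intro: member_le_sum[of _ UNIV, simplified])
qed (simp add: finite_PiE)

lemma Xi_nonempty: "Xi k \<noteq> ({} :: ('v::finite \<Rightarrow> nat) set)"
proof -
  obtain x :: 'v where True by blast
  have "(\<lambda>z. if z = x then k else 0) \<in> Xi k" unfolding Xi_def by simp
  then show ?thesis by blast
qed

lemma sum_Xi_particles: "\<eta> \<in> Xi k \<Longrightarrow> (\<Sum>x\<in>UNIV. real (\<eta> x)) = real k"
  unfolding Xi_def by (simp flip: of_nat_sum)

lemma sum_fun_upd_finite:
  fixes \<xi> :: "'v::finite \<Rightarrow> nat"
  shows "(\<Sum>z\<in>UNIV. (\<xi>(x := n)) z) + \<xi> x = (\<Sum>z\<in>UNIV. \<xi> z) + n"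
  using sum.remove[of UNIV x "\<xi>(x := n)"] sum.remove[of UNIV x \<xi>] by simp

lemma sum_add_particle:
  fixes \<xi> :: "'v::finite \<Rightarrow> nat"
  shows "(\<Sum>z\<in>UNIV. add_particle x \<xi> z) = Suc (\<Sum>z\<in>UNIV. \<xi> z)"
  using sum_fun_upd_finite[of \<xi> x "\<xi> x + 1"] by (simp add: add_particle_def)

lemma sum_remove_particle:
  fixes \<xi> :: "'v::finite \<Rightarrow> nat"
  shows "\<xi> x \<noteq> 0 \<Longrightarrow> (\<Sum>z\<in>UNIV. (\<xi>(x := \<xi> x - 1)) z) = (\<Sum>z\<in>UNIV. \<xi> z) - 1"
  using sum_fun_upd_finite[of \<xi> x "\<xi> x - 1"] by simp

lemma bij_betw_add_particle:
  "bij_betw (add_particle x) (Xi k :: ('v::finite \<Rightarrow> nat) set) {\<eta> \<in> Xi (Suc k). \<eta> x \<noteq> 0}"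
proof (rule bij_betw_byWitness[where f' = "\<lambda>\<eta>. \<eta>(x := \<eta> x - 1)"])
  show "add_particle x ` Xi k \<subseteq> {\<eta> \<in> Xi (Suc k). \<eta> x \<noteq> 0}"
    by (auto simp: Xi_def sum_add_particle) (simp add: add_particle_def)
  show "(\<lambda>\<eta>. \<eta>(x := \<eta> x - 1)) ` {\<eta> \<in> Xi (Suc k). \<eta> x \<noteq> 0} \<subseteq> Xi k"
  proof (rule image_subsetI)
    fix \<eta> assume "\<eta> \<in> {\<eta> \<in> Xi (Suc k). \<eta> x \<noteq> 0}"
    then show "\<eta>(x := \<eta> x - 1) \<in> Xi k"
      using sum_remove_particle[of \<eta> x] by (simp add: Xi_def)
  qed
qed (auto simp: add_particle_def)

lemma mu_weight_pos:
  assumes "\<And>x. \<alpha> x > 0"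
  shows "mu_weight \<alpha> \<eta> > 0"
  unfolding mu_weight_def using assms by (intro prod_pos) (simp add: add_pos_nonneg)

lemma sum_mu_weight_pos:
  fixes \<alpha> :: "'v::finite \<Rightarrow> real"
  assumes "\<And>x. \<alpha> x > 0"
  shows "(\<Sum>\<eta>\<in>Xi k. mu_weight \<alpha> \<eta>) > 0"
  using finite_Xi Xi_nonempty mu_weight_pos[of \<alpha>] assms by (intro sum_pos) auto

lemma mu_weight_add_particle:
  fixes \<alpha> :: "'v::finite \<Rightarrow> real"
  assumes pos: "\<And>x. \<alpha> x > 0"
  shows "real (add_particle x \<xi> x) * mu_weight \<alpha> (add_particle x \<xi>)
    = (\<alpha> x + real (\<xi> x)) * mu_weight \<alpha> \<xi>"
proof -
  define g where "g z n = Gamma (\<alpha> z + real n) / (Gamma (\<alpha> z) * fact n)" for z n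
  have factor: "mu_weight \<alpha> \<eta> = g x (\<eta> x) * (\<Prod>z\<in>UNIV - {x}. g z (\<eta> z))" for \<eta>
    unfolding mu_weight_def g_def by (subst prod.remove[of UNIV x]) auto
  have rest: "(\<Prod>z\<in>UNIV - {x}. g z (add_particle x \<xi> z)) = (\<Prod>z\<in>UNIV - {x}. g z (\<xi> z))"
    by (rule prod.cong) (auto simp: add_particle_def)
  have "\<alpha> x + real (\<xi> x) \<notin> \<int>\<^sub>\<le>\<^sub>0"
    using pos[of x] by (auto simp: nonpos_Ints_def)
  from Gamma_plus1[OF this]
  have "Gamma (\<alpha> x + real (Suc (\<xi> x))) = (\<alpha> x + real (\<xi> x)) * Gamma (\<alpha> x + real (\<xi> x))"
    by (simp add: add_ac)
  moreover have "Gamma (\<alpha> x) \<noteq> 0" using Gamma_real_pos[OF pos[of x]] by simp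
  ultimately have "real (Suc (\<xi> x)) * g x (Suc (\<xi> x)) = (\<alpha> x + real (\<xi> x)) * g x (\<xi> x)"
    unfolding g_def by (simp add: field_simps del: of_nat_Suc)
  then show ?thesis
    unfolding factor[of "add_particle x \<xi>"] factor[of \<xi>] rest
    by (simp add: add_particle_def mult_ac)
qed

lemma sum_Xi_Suc_add_particle:
  fixes \<alpha> :: "'v::finite \<Rightarrow> real" and G :: "('v \<Rightarrow> nat) \<Rightarrow> 'v \<Rightarrow> real"
  assumes "\<And>x. \<alpha> x > 0"
  shows "(\<Sum>\<eta>\<in>Xi (Suc k). \<Sum>x\<in>UNIV. real (\<eta> x) * mu_weight \<alpha> \<eta> * G \<eta> x)
    = (\<Sum>\<xi>\<in>Xi k. \<Sum>x\<in>UNIV. (\<alpha> x + real (\<xi> x)) * mu_weight \<alpha> \<xi> * G (add_particle x \<xi>) x)"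
proof -
  have "(\<Sum>\<eta>\<in>Xi (Suc k). real (\<eta> x) * mu_weight \<alpha> \<eta> * G \<eta> x)
      = (\<Sum>\<xi>\<in>Xi k. (\<alpha> x + real (\<xi> x)) * mu_weight \<alpha> \<xi> * G (add_particle x \<xi>) x)" for x
  proof -
    have "(\<Sum>\<eta>\<in>Xi (Suc k). real (\<eta> x) * mu_weight \<alpha> \<eta> * G \<eta> x)
        = (\<Sum>\<eta>\<in>{\<eta> \<in> Xi (Suc k). \<eta> x \<noteq> 0}. real (\<eta> x) * mu_weight \<alpha> \<eta> * G \<eta> x)"
      by (rule sum.mono_neutral_right) (auto simp: finite_Xi)
    also have "\<dots> = (\<Sum>\<xi>\<in>Xi k. real (add_particle x \<xi> x) * mu_weight \<alpha> (add_particle x \<xi>)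
        * G (add_particle x \<xi>) x)"
      by (rule sum.reindex_bij_betw[OF bij_betw_add_particle, symmetric])
    finally show ?thesis
      by (simp add: mu_weight_add_particle[OF assms])
  qed
  then show ?thesis
    by (subst (1 2) sum.swap) simp
qed

lemma sum_Xi_count_particles:
  "(\<Sum>\<eta>\<in>Xi k. \<Sum>x\<in>UNIV. real (\<eta> x) * H \<eta>) = real k * (\<Sum>\<eta>\<in>Xi k. H \<eta>)"
  by (simp add: sum_distrib_left sum_distrib_right[symmetric] sum_Xi_particles cong: sum.cong)

section \<open>Energy and variance as averages over configurations with one particle less\<close>

lemma neg_gen_L: "- gen_L c \<alpha> f \<eta> = (\<Sum>x\<in>UNIV. real (\<eta> x) *
    (\<Sum>y\<in>UNIV. c x y * (\<alpha> y + real (\<eta> y)) * (f \<eta> - f (move \<eta> x y))))"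
  unfolding gen_L_def sum_negf[symmetric] minus_mult_right by (simp add: algebra_simps)

lemma move_add_particle: "move (add_particle x \<xi>) x y = add_particle y \<xi>"
  unfolding move_def add_particle_def by (rule ext) auto

(* The extra particle at x only changes the rate of the jump to y = x, whose term vanishes. *)
lemma jump_rates_add_particle:
  "(\<Sum>y\<in>UNIV. c x y * (\<alpha> y + real (add_particle x \<xi> y))
      * (f (add_particle x \<xi>) - f (move (add_particle x \<xi>) x y)))
    = - A_RW c (\<lambda>y. \<alpha> y + real (\<xi> y)) (\<lambda>y. f (add_particle y \<xi>)) x"
  unfolding neg_A_RW move_add_particle
  by (intro sum.cong refl) (auto simp: add_particle_def)

lemma creation_eq_sum_add_particle:
  "creation \<alpha> f \<xi> = (\<Sum>x\<in>UNIV. (\<alpha> x + real (\<xi> x)) * f (add_particle x \<xi>))"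
  unfolding creation_def add_particle_def by (simp add: add_ac)

lemma energy_eq_sum_rw_dirichlet:
  fixes \<alpha> :: "'v::finite \<Rightarrow> real"
  assumes "\<And>x. \<alpha> x > 0"
  shows "energy c \<alpha> (Suc k) f = (\<Sum>\<xi>\<in>Xi k. mu_weight \<alpha> \<xi> *
      rw_dirichlet c (\<lambda>x. \<alpha> x + real (\<xi> x)) (\<lambda>x. f (add_particle x \<xi>)) (\<lambda>x. f (add_particle x \<xi>)))
    / (\<Sum>\<eta>\<in>Xi (Suc k). mu_weight \<alpha> \<eta>)"
proof -
  have "energy c \<alpha> (Suc k) f = (\<Sum>\<eta>\<in>Xi (Suc k). mu_weight \<alpha> \<eta> * f \<eta> * - gen_L c \<alpha> f \<eta>)
      / (\<Sum>\<eta>\<in>Xi (Suc k). mu_weight \<alpha> \<eta>)"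
    unfolding energy_def inner_mu_def mu_def sum_divide_distrib by (intro sum.cong refl) simp
  also have "(\<Sum>\<eta>\<in>Xi (Suc k). mu_weight \<alpha> \<eta> * f \<eta> * - gen_L c \<alpha> f \<eta>)
      = (\<Sum>\<eta>\<in>Xi (Suc k). \<Sum>x\<in>UNIV. real (\<eta> x) * mu_weight \<alpha> \<eta> * (f \<eta> *
          (\<Sum>y\<in>UNIV. c x y * (\<alpha> y + real (\<eta> y)) * (f \<eta> - f (move \<eta> x y)))))"
    unfolding neg_gen_L by (simp add: sum_distrib_left mult_ac)
  also have "\<dots> = (\<Sum>\<xi>\<in>Xi k. mu_weight \<alpha> \<xi> *
      rw_dirichlet c (\<lambda>x. \<alpha> x + real (\<xi> x)) (\<lambda>x. f (add_particle x \<xi>)) (\<lambda>x. f (add_particle x \<xi>)))"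
    unfolding sum_Xi_Suc_add_particle[OF assms] jump_rates_add_particle rw_dirichlet_def
    by (simp add: sum_distrib_left mult_ac)
  finally show ?thesis .
qed

lemma sum_mu_weight_mean_zero:
  fixes \<alpha> :: "'v::finite \<Rightarrow> real"
  assumes "\<And>x. \<alpha> x > 0" and "\<And>\<xi>. \<xi> \<in> Xi k \<Longrightarrow> creation \<alpha> f \<xi> = 0"
  shows "(\<Sum>\<eta>\<in>Xi (Suc k). mu_weight \<alpha> \<eta> * f \<eta>) = 0"
proof -
  have "real (Suc k) * (\<Sum>\<eta>\<in>Xi (Suc k). mu_weight \<alpha> \<eta> * f \<eta>)
      = (\<Sum>\<eta>\<in>Xi (Suc k). \<Sum>x\<in>UNIV. real (\<eta> x) * mu_weight \<alpha> \<eta> * f \<eta>)"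
    using sum_Xi_count_particles[where k = "Suc k" and H = "\<lambda>\<eta>. mu_weight \<alpha> \<eta> * f \<eta>"]
    by (simp add: mult.assoc)
  also have "\<dots> = (\<Sum>\<xi>\<in>Xi k. mu_weight \<alpha> \<xi> * creation \<alpha> f \<xi>)"
    unfolding sum_Xi_Suc_add_particle[OF assms(1)] creation_eq_sum_add_particle
    by (simp add: sum_distrib_left mult_ac)
  also have "\<dots> = 0" using assms(2) by simp
  finally show ?thesis by simp
qed

lemma Var_mu_eq_sum_weighted_sq_norm:
  fixes \<alpha> :: "'v::finite \<Rightarrow> real"
  assumes "\<And>x. \<alpha> x > 0" and "\<And>\<xi>. \<xi> \<in> Xi k \<Longrightarrow> creation \<alpha> f \<xi> = 0"
  shows "real (Suc k) * Var_mu \<alpha> (Suc k) f = (\<Sum>\<xi>\<in>Xi k. mu_weight \<alpha> \<xi> *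
      weighted_sq_norm (\<lambda>x. \<alpha> x + real (\<xi> x)) (\<lambda>x. f (add_particle x \<xi>)))
    / (\<Sum>\<eta>\<in>Xi (Suc k). mu_weight \<alpha> \<eta>)"
proof -
  have "inner_mu \<alpha> (Suc k) f (\<lambda>_. 1) = 0"
    using sum_mu_weight_mean_zero[OF assms]
    by (simp add: inner_mu_def mu_def sum_divide_distrib[symmetric])
  then have "Var_mu \<alpha> (Suc k) f = (\<Sum>\<eta>\<in>Xi (Suc k). mu_weight \<alpha> \<eta> * (f \<eta>)\<^sup>2)
      / (\<Sum>\<eta>\<in>Xi (Suc k). mu_weight \<alpha> \<eta>)"
    by (simp add: Var_mu_def inner_mu_def mu_def sum_divide_distrib power2_eq_square mult_ac)
  moreover have "real (Suc k) * (\<Sum>\<eta>\<in>Xi (Suc k). mu_weight \<alpha> \<eta> * (f \<eta>)\<^sup>2)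
      = (\<Sum>\<eta>\<in>Xi (Suc k). \<Sum>x\<in>UNIV. real (\<eta> x) * mu_weight \<alpha> \<eta> * (f \<eta>)\<^sup>2)"
    using sum_Xi_count_particles[where k = "Suc k" and H = "\<lambda>\<eta>. mu_weight \<alpha> \<eta> * (f \<eta>)\<^sup>2"]
    by (simp add: mult.assoc)
  moreover have "\<dots> = (\<Sum>\<xi>\<in>Xi k. mu_weight \<alpha> \<xi> *
      weighted_sq_norm (\<lambda>x. \<alpha> x + real (\<xi> x)) (\<lambda>x. f (add_particle x \<xi>)))"
    unfolding sum_Xi_Suc_add_particle[OF assms(1)] weighted_sq_norm_def
    by (simp add: sum_distrib_left mult_ac)
  ultimately show ?thesis by simp
qed

lemma rw_poincare_add_particle:
  fixes c :: "'v::finite \<Rightarrow> 'v \<Rightarrow> real"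
  assumes sym: "\<And>x y. c x y = c y x" and nonneg: "\<And>x y. c x y \<ge> 0"
    and connected: "\<And>x y. (x, y) \<in> {(a, b). c a b > 0}\<^sup>*"
    and pos: "\<And>x. \<alpha> x > 0" and annih: "creation \<alpha> f \<xi> = 0"
    and gap: "g \<le> gap_RW c (\<lambda>x. \<alpha> x + real (\<xi> x))"
  shows "g * weighted_sq_norm (\<lambda>x. \<alpha> x + real (\<xi> x)) (\<lambda>x. f (add_particle x \<xi>))
    \<le> rw_dirichlet c (\<lambda>x. \<alpha> x + real (\<xi> x)) (\<lambda>x. f (add_particle x \<xi>)) (\<lambda>x. f (add_particle x \<xi>))"
    (is "g * ?norm \<le> ?dirichlet")
proof -
  have \<beta>_pos: "\<And>x. \<alpha> x + real (\<xi> x) > 0" using pos by (simp add: add_pos_nonneg)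
  then have "g * ?norm \<le> gap_RW c (\<lambda>x. \<alpha> x + real (\<xi> x)) * ?norm"
    using gap weighted_sq_norm_nonneg[of "\<lambda>x. \<alpha> x + real (\<xi> x)"] by (simp add: less_imp_le mult_right_mono)
  also have "\<dots> \<le> ?dirichlet"
    using sym nonneg \<beta>_pos connected annih
    by (intro rw_poincare) (simp_all add: creation_eq_sum_add_particle)
  finally show ?thesis .
qed

theorem lemma3p3:
  fixes c :: "'v::finite \<Rightarrow> 'v \<Rightarrow> real" and \<alpha> :: "'v \<Rightarrow> real"
    and k :: nat and f :: "('v \<Rightarrow> nat) \<Rightarrow> real"
  assumes c_sym: "\<And>x y. c x y = c y x"
    and c_nonneg: "\<And>x y. c x y \<ge> 0"
    and connected: "\<And>x y. (x, y) \<in> {(a, b). c a b > 0}\<^sup>*"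
    and \<alpha>_pos: "\<And>x. \<alpha> x > 0"
    and k_pos: "k \<ge> 1"
    and annih: "\<And>\<xi>. \<xi> \<in> Xi (k - 1) \<Longrightarrow> creation \<alpha> f \<xi> = 0"
  shows "energy c \<alpha> k f \<ge>
    real k * (INF \<xi>\<in>Xi (k - 1). gap_RW c (\<lambda>x. \<alpha> x + real (\<xi> x))) * Var_mu \<alpha> k f"
proof -
  obtain m where k: "k = Suc m" using k_pos by (cases k) auto
  define gap where "gap = (INF \<xi>\<in>Xi m. gap_RW c (\<lambda>x. \<alpha> x + real (\<xi> x)))"
  define \<beta> where "\<beta> \<xi> x = \<alpha> x + real (\<xi> x)" for \<xi> :: "'v \<Rightarrow> nat" and x
  define \<phi> where "\<phi> \<xi> x = f (add_particle x \<xi>)" for \<xi> :: "'v \<Rightarrow> nat" and x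
  have "gap \<le> gap_RW c (\<lambda>x. \<alpha> x + real (\<xi> x))" if "\<xi> \<in> Xi m" for \<xi>
    unfolding gap_def using that finite_Xi by (intro cINF_lower bdd_below_finite) auto
  with c_sym c_nonneg connected \<alpha>_pos annih
  have "gap * weighted_sq_norm (\<beta> \<xi>) (\<phi> \<xi>) \<le> rw_dirichlet c (\<beta> \<xi>) (\<phi> \<xi>) (\<phi> \<xi>)"
    if "\<xi> \<in> Xi m" for \<xi>
    unfolding \<beta>_def \<phi>_def using that by (intro rw_poincare_add_particle) (auto simp: k)
  then have "gap * (\<Sum>\<xi>\<in>Xi m. mu_weight \<alpha> \<xi> * weighted_sq_norm (\<beta> \<xi>) (\<phi> \<xi>))
      \<le> (\<Sum>\<xi>\<in>Xi m. mu_weight \<alpha> \<xi> * rw_dirichlet c (\<beta> \<xi>) (\<phi> \<xi>) (\<phi> \<xi>))"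
    unfolding sum_distrib_left mult.left_commute[of gap]
    using mu_weight_pos[of \<alpha>] \<alpha>_pos by (intro sum_mono mult_left_mono) (auto simp: less_imp_le)
  then have "gap * (real k * Var_mu \<alpha> k f) \<le> energy c \<alpha> k f"
    using Var_mu_eq_sum_weighted_sq_norm[of \<alpha> m f] energy_eq_sum_rw_dirichlet[of \<alpha> c m f]
      sum_mu_weight_pos[of \<alpha> k] \<alpha>_pos annih
    unfolding k \<beta>_def \<phi>_def by (simp add: divide_right_mono less_imp_le)
  then show ?thesis
    unfolding gap_def k by (simp add: mult_ac)
qed

end
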